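(* Let $G=(X,\Sigma,\longrightarrow,X_0)$ and $R=(Z,\Sigma,\longrightarrow,Z_0)$ be automata and $S=(Y,\Sigma,\longrightarrow,Y_0)\in\mathit{SPR}(G,R)$. Then $S\|G\sqsubseteq\mathcal{A}(E)\|G$ for some $\Sigma_{ucr}$-controllability set $E$ from $G$ to $R$. In particular, for any cc-simulation $\Phi$ from $S\|G$ to $R$, $S\|G\sqsubseteq\mathcal{A}(E(\Phi))\|G$, where $E(\Phi)=\{\theta_y:y\in Y\}$ and $\theta_y=\{(x,z):((y,x),z)\in\Phi\text{ and }(y,x)\text{ is reachable in }S\|G\}$.
   Context: An automaton is a 4-tuple $A=(Q,\Sigma,\longrightarrow,Q_0)$ with state set $Q$, finite event set $\Sigma$, ${\longrightarrow}\subseteq Q\times\Sigma\times Q$ and $\emptyset\neq Q_0\subseteq Q$. Write $q\xrightarrow{\sigma}q'$ for $(q,\sigma,q')\in{\longrightarrow}$, $q\xrightarrow{\sigma}$ if some such $q'$ exists; extend to strings. A state is reachable if reached from an initial state by some string. Events are partitioned into uncontrollable $\Sigma_{uc}$ and controllable $\Sigma_c$; $\Sigma_r\subseteq\Sigma$ is a fixed set of required events. $S\|G=(Y\times X,\Sigma,\longrightarrow,Y_0\times X_0)$ with $(y,x)\xrightarrow{\sigma}(y',x')$ iff $y\xrightarrow{\sigma}y'$ and $x\xrightarrow{\sigma}x'$ (similarly for any automaton in place of $S$). $S$ is $\Sigma_{uc}$-admissible w.r.t. $G$ if for every reachable $(y,x)$ of $S\|G$ and $\sigma\in\Sigma_{uc}$,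 $x\xrightarrow{\sigma}$ implies $(y,x)\xrightarrow{\sigma}$. For automata $A_1,A_2$ (state sets $Q_1,Q_2$, initial sets $Q_{01},Q_{02}$), $\Phi\subseteq Q_1\times Q_2$ is a simulation if (initial state) every $q_0\in Q_{01}$ has $p_0\in Q_{02}$ with $(q_0,p_0)\in\Phi$ and (forward) for $(q,p)\in\Phi$, $\sigma\in\Sigma$, $q\xrightarrow{\sigma}q'$ there is $p'$ with $p\xrightarrow{\sigma}p'$, $(q',p')\in\Phi$; a cc-simulation if moreover ($\Sigma_r$-backward) for $(q,p)\in\Phi$, $\sigma\in\Sigma_r$, $p\xrightarrow{\sigma}p'$ there is $q'$ with $q\xrightarrow{\sigma}q'$, $(q',p')\in\Phi$. $A_1\sqsubseteq A_2$, $A_1\sqsubseteq_{cc}A_2$ mean such relations exist. $\mathit{SPR}(G,R)$ is the set of $\Sigma_{uc}$-admissible supervisors $S$ with $S\|G\sqsubseteq_{cc}R$. For $W,W'\subseteq X\times Z$: $\mathit{match}_{G,R}(W,\sigma,W')$ iff for all $(x,z)\in W$ and $x\xrightarrow{\sigma}x'$ there is $z'$ with $z\xrightarrow{\sigma}z'$ and $(x',z')\in W'$. $E\subseteq\wp(X\times Z)$ is a $\Sigma_{ucr}$-controllability set from $G$ to $R$ if: (istate) some $W_0\in E$ satisfies $\forall x_0\in X_0\,\exists z_0\in Z_0\,((x_0,z_0)\in W_0)$; (a) for every $W\in E$, $\sigma\in\Sigma_{uc}$ there is $W'\in E$ with $\mathit{match}_{G,R}(W,\sigma,W')$; (b) for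 every $W\in E$, $(x,z)\in W$, $\sigma\in\Sigma_r$, $z\xrightarrow{\sigma}z'$, there exist $x'$, $W'\in E$ with $x\xrightarrow{\sigma}x'$, $(x',z')\in W'$, $\mathit{match}_{G,R}(W,\sigma,W')$. For any $E\subseteq\wp(X\times Z)$, $E^*=\bigcup_{\widetilde W\in E}\wp(\widetilde W)$, $\mathrm{Succ}_\sigma(W)=\bigcup_{(x,z)\in W}\{x':x\xrightarrow{\sigma}x'\}\times\{z':z\xrightarrow{\sigma}z'\}$, and $\mathcal{A}(E)=(E^*,\Sigma,\longrightarrow,I_E)$ with $I_E=\{W_0\in E^*:\forall x_0\in X_0\,\exists z_0\in Z_0\,((x_0,z_0)\in W_0)\text{ and }W_0\subseteq X_0\times Z_0\}$ and $W\xrightarrow{\sigma}W'$ iff (i) there exist $(x,z)\in W$, $(x',z')\in W'$ with $x\xrightarrow{\sigma}x'$, $z\xrightarrow{\sigma}z'$; (ii) $\mathit{match}_{G,R}(W,\sigma,W')$; (iii) $W'\subseteq\mathrm{Succ}_\sigma(W)$. *)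

theory Defs
  imports Main
begin

text \<open>An automaton over the event type 'e (the finite event set Sigma is the whole
  finite type 'e) and state type 'q (the state set Q is the whole type 'q).\<close>
record ('q, 'e) aut =
  trans :: "('q \<times> 'e \<times> 'q) set"
  init  :: "'q set"

definition is_aut :: "('q, 'e) aut \<Rightarrow> bool" where
  "is_aut A \<longleftrightarrow> init A \<noteq> {}"

definition step_rel :: "('q, 'e) aut \<Rightarrow> ('q \<times> 'q) set" where
  "step_rel A = {(q, q'). \<exists>\<sigma>. (q, \<sigma>, q') \<in> trans A}"

definition reach :: "('q, 'e) aut \<Rightarrow> 'q set" where
  "reach A = {q. \<exists>q0 \<in> init A. (q0, q) \<in> (step_rel A)\<^sup>*}"

definition sync :: "('y, 'e) aut \<Rightarrow> ('x, 'e) aut \<Rightarrow> ('y \<times> 'x, 'e) aut" where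
  "sync S G = \<lparr> trans = {((y, x), \<sigma>, (y', x')). (y, \<sigma>, y') \<in> trans S \<and> (x, \<sigma>, x') \<in> trans G},
                 init = init S \<times> init G \<rparr>"

definition admissible :: "'e set \<Rightarrow> ('y, 'e) aut \<Rightarrow> ('x, 'e) aut \<Rightarrow> bool" where
  "admissible Euc S G \<longleftrightarrow>
     (\<forall>y x. (y, x) \<in> reach (sync S G) \<longrightarrow> (\<forall>\<sigma> \<in> Euc.
        (\<exists>x'. (x, \<sigma>, x') \<in> trans G) \<longrightarrow> (\<exists>q'. ((y, x), \<sigma>, q') \<in> trans (sync S G))))"

definition is_sim :: "('p, 'e) aut \<Rightarrow> ('q, 'e) aut \<Rightarrow> ('p \<times> 'q) set \<Rightarrow> bool" where
  "is_sim A1 A2 \<Phi> \<longleftrightarrow>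
     (\<forall>q0 \<in> init A1. \<exists>p0 \<in> init A2. (q0, p0) \<in> \<Phi>) \<and>
     (\<forall>q p \<sigma> q'. (q, p) \<in> \<Phi> \<and> (q, \<sigma>, q') \<in> trans A1 \<longrightarrow>
        (\<exists>p'. (p, \<sigma>, p') \<in> trans A2 \<and> (q', p') \<in> \<Phi>))"

definition is_ccsim :: "'e set \<Rightarrow> ('p, 'e) aut \<Rightarrow> ('q, 'e) aut \<Rightarrow> ('p \<times> 'q) set \<Rightarrow> bool" where
  "is_ccsim Sr A1 A2 \<Phi> \<longleftrightarrow> is_sim A1 A2 \<Phi> \<and>
     (\<forall>q p \<sigma> p'. (q, p) \<in> \<Phi> \<and> \<sigma> \<in> Sr \<and> (p, \<sigma>, p') \<in> trans A2 \<longrightarrow>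
        (\<exists>q'. (q, \<sigma>, q') \<in> trans A1 \<and> (q', p') \<in> \<Phi>))"

definition sim :: "('p, 'e) aut \<Rightarrow> ('q, 'e) aut \<Rightarrow> bool" where
  "sim A1 A2 \<longleftrightarrow> (\<exists>\<Phi>. is_sim A1 A2 \<Phi>)"

definition ccsim :: "'e set \<Rightarrow> ('p, 'e) aut \<Rightarrow> ('q, 'e) aut \<Rightarrow> bool" where
  "ccsim Sr A1 A2 \<longleftrightarrow> (\<exists>\<Phi>. is_ccsim Sr A1 A2 \<Phi>)"

definition SPR :: "'e set \<Rightarrow> 'e set \<Rightarrow> ('x, 'e) aut \<Rightarrow> ('z, 'e) aut \<Rightarrow> ('y, 'e) aut set" where
  "SPR Euc Sr G R = {S. is_aut S \<and> admissible Euc S G \<and> ccsim Sr (sync S G) R}"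

definition match :: "('x, 'e) aut \<Rightarrow> ('z, 'e) aut \<Rightarrow> ('x \<times> 'z) set \<Rightarrow> 'e \<Rightarrow> ('x \<times> 'z) set \<Rightarrow> bool" where
  "match G R W \<sigma> W' \<longleftrightarrow>
     (\<forall>x z x'. (x, z) \<in> W \<and> (x, \<sigma>, x') \<in> trans G \<longrightarrow>
        (\<exists>z'. (z, \<sigma>, z') \<in> trans R \<and> (x', z') \<in> W'))"

definition ctrl_set :: "'e set \<Rightarrow> 'e set \<Rightarrow> ('x, 'e) aut \<Rightarrow> ('z, 'e) aut \<Rightarrow> ('x \<times> 'z) set set \<Rightarrow> bool" where
  "ctrl_set Euc Sr G R E \<longleftrightarrow>
     (\<exists>W0 \<in> E. \<forall>x0 \<in> init G. \<exists>z0 \<in> init R. (x0, z0) \<in> W0) \<and>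
     (\<forall>W \<in> E. \<forall>\<sigma> \<in> Euc. \<exists>W' \<in> E. match G R W \<sigma> W') \<and>
     (\<forall>W \<in> E. \<forall>x z \<sigma> z'. (x, z) \<in> W \<and> \<sigma> \<in> Sr \<and> (z, \<sigma>, z') \<in> trans R \<longrightarrow>
        (\<exists>x' W'. (x, \<sigma>, x') \<in> trans G \<and> W' \<in> E \<and> (x', z') \<in> W' \<and> match G R W \<sigma> W'))"

definition Estar :: "'a set set \<Rightarrow> 'a set set" where
  "Estar E = (\<Union>W \<in> E. Pow W)"

definition Succ :: "('x, 'e) aut \<Rightarrow> ('z, 'e) aut \<Rightarrow> 'e \<Rightarrow> ('x \<times> 'z) set \<Rightarrow> ('x \<times> 'z) set" where
  "Succ G R \<sigma> W = (\<Union>(x, z) \<in> W. {x'. (x, \<sigma>, x') \<in> trans G} \<times> {z'. (z, \<sigma>, z') \<in> trans R})"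

definition autE :: "('x, 'e) aut \<Rightarrow> ('z, 'e) aut \<Rightarrow> ('x \<times> 'z) set set \<Rightarrow> (('x \<times> 'z) set, 'e) aut" where
  "autE G R E = \<lparr>
     trans = {(W, \<sigma>, W'). W \<in> Estar E \<and> W' \<in> Estar E \<and>
               (\<exists>x z x' z'. (x, z) \<in> W \<and> (x', z') \<in> W' \<and> (x, \<sigma>, x') \<in> trans G \<and> (z, \<sigma>, z') \<in> trans R) \<and>
               match G R W \<sigma> W' \<and> W' \<subseteq> Succ G R \<sigma> W},
     init = {W0 \<in> Estar E. (\<forall>x0 \<in> init G. \<exists>z0 \<in> init R. (x0, z0) \<in> W0) \<and> W0 \<subseteq> init G \<times> init R} \<rparr>"

definition theta :: "('y, 'e) aut \<Rightarrow> ('x, 'e) aut \<Rightarrow> (('y \<times> 'x) \<times> 'z) set \<Rightarrow> 'y \<Rightarrow> ('x \<times> 'z) set" where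
  "theta S G \<Phi> y = {(x, z). ((y, x), z) \<in> \<Phi> \<and> (y, x) \<in> reach (sync S G)}"

definition EPhi :: "('y, 'e) aut \<Rightarrow> ('x, 'e) aut \<Rightarrow> (('y \<times> 'x) \<times> 'z) set \<Rightarrow> ('x \<times> 'z) set set" where
  "EPhi S G \<Phi> = range (theta S G \<Phi>)"

end

theory Submission
  imports Defs
begin

text \<open>Each supervisor state \<open>y\<close> certifies the set \<open>\<theta>\<^sub>y\<close> of plant/specification pairs
  related to it by a cc-simulation \<open>\<Phi>\<close>. Forward simulation makes \<open>\<theta>\<^sub>y\<close> match \<open>\<theta>\<^sub>y\<^sub>'\<close> along
  every supervisor transition \<open>y \<rightarrow> y'\<close>; an uncontrollable event the supervisor refuses at \<open>y\<close>
  is, by admissibility, enabled at no plant state of \<open>\<theta>\<^sub>y\<close>, so matching is vacuous there; and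
  \<open>\<Sigma>\<^sub>r\<close>-backward simulation provides the required-event condition. A state \<open>(y, x)\<close> of \<open>S \<parallel> G\<close> is
  then simulated by \<open>(W, x)\<close>, where \<open>W \<subseteq> \<theta>\<^sub>y\<close> contains a pair at \<open>x\<close> and is cut down to
  successors at each step, as transitions of \<open>\<A>(E)\<close> demand.\<close>

lemma sync_trans [simp]:
  "(((y, x), \<sigma>, (y', x')) \<in> trans (sync S G)) \<longleftrightarrow> (y, \<sigma>, y') \<in> trans S \<and> (x, \<sigma>, x') \<in> trans G"
  by (simp add: sync_def)

lemma sync_init [simp]: "init (sync S G) = init S \<times> init G"
  by (simp add: sync_def)

lemma reach_init: "q \<in> init A \<Longrightarrow> q \<in> reach A"
  by (auto simp: reach_def)

lemma reach_step: "q \<in> reach A \<Longrightarrow> (q, \<sigma>, q') \<in> trans A \<Longrightarrow> q' \<in> reach A"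
  unfolding reach_def step_rel_def by (auto intro: rtrancl_into_rtrancl)

lemma mem_theta [simp]:
  "(x, z) \<in> theta S G \<Phi> y \<longleftrightarrow> ((y, x), z) \<in> \<Phi> \<and> (y, x) \<in> reach (sync S G)"
  by (simp add: theta_def)

lemma theta_in_EPhi [simp]: "theta S G \<Phi> y \<in> EPhi S G \<Phi>"
  by (simp add: EPhi_def)

lemma is_ccsim_is_sim: "is_ccsim Sr A1 A2 \<Phi> \<Longrightarrow> is_sim A1 A2 \<Phi>"
  by (simp add: is_ccsim_def)

lemma theta_covers_init:
  assumes "is_sim (sync S G) R \<Phi>" and "y0 \<in> init S" and "x0 \<in> init G"
  shows "\<exists>z0 \<in> init R. (x0, z0) \<in> theta S G \<Phi> y0"
proof -
  have init: "(y0, x0) \<in> init (sync S G)" using assms(2,3) by simp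
  then obtain z0 where "z0 \<in> init R" "((y0, x0), z0) \<in> \<Phi>"
    using assms(1) unfolding is_sim_def by blast
  then show ?thesis using reach_init[OF init] by auto
qed

lemma match_theta_step:
  assumes sim: "is_sim (sync S G) R \<Phi>" and "(y, \<sigma>, y') \<in> trans S"
  shows "match G R (theta S G \<Phi> y) \<sigma> (theta S G \<Phi> y')"
  unfolding match_def
proof (intro allI impI)
  fix x z x'
  assume "(x, z) \<in> theta S G \<Phi> y \<and> (x, \<sigma>, x') \<in> trans G"
  then have "((y, x), z) \<in> \<Phi>" and reach: "(y, x) \<in> reach (sync S G)"
    and step: "((y, x), \<sigma>, (y', x')) \<in> trans (sync S G)"
    using assms(2) by auto
  moreover obtain z' where "(z, \<sigma>, z') \<in> trans R" "((y', x'), z') \<in> \<Phi>"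
    using sim calculation unfolding is_sim_def by blast
  ultimately show "\<exists>z'. (z, \<sigma>, z') \<in> trans R \<and> (x', z') \<in> theta S G \<Phi> y'"
    using reach_step[OF reach step] by auto
qed

lemma match_theta_refused:
  assumes "admissible Euc S G" and "\<sigma> \<in> Euc" and "\<nexists>y'. (y, \<sigma>, y') \<in> trans S"
  shows "match G R (theta S G \<Phi> y) \<sigma> W'"
  unfolding match_def
proof (intro allI impI)
  fix x z x'
  assume "(x, z) \<in> theta S G \<Phi> y \<and> (x, \<sigma>, x') \<in> trans G"
  then have "(y, x) \<in> reach (sync S G)" and "\<exists>x'. (x, \<sigma>, x') \<in> trans G" by auto
  then have "\<exists>q'. ((y, x), \<sigma>, q') \<in> trans (sync S G)"
    using assms(1,2) unfolding admissible_def by blast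
  then have "\<exists>y'. (y, \<sigma>, y') \<in> trans S" by auto
  with assms(3) show "\<exists>z'. (z, \<sigma>, z') \<in> trans R \<and> (x', z') \<in> W'" by blast
qed

lemma ctrl_set_EPhi:
  assumes "is_aut S" and adm: "admissible Euc S G" and cc: "is_ccsim Sr (sync S G) R \<Phi>"
  shows "ctrl_set Euc Sr G R (EPhi S G \<Phi>)"
proof -
  have sim: "is_sim (sync S G) R \<Phi>" using cc by (rule is_ccsim_is_sim)
  show ?thesis
    unfolding ctrl_set_def
  proof (intro conjI ballI allI impI)
    obtain y0 where "y0 \<in> init S" using assms(1) unfolding is_aut_def by blast
    then show "\<exists>W0 \<in> EPhi S G \<Phi>. \<forall>x0 \<in> init G. \<exists>z0 \<in> init R. (x0, z0) \<in> W0"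
      using theta_covers_init[OF sim] theta_in_EPhi[of S G \<Phi> y0] by blast
  next
    fix W \<sigma> assume W: "W \<in> EPhi S G \<Phi>" and "\<sigma> \<in> Euc"
    then obtain y where Wy: "W = theta S G \<Phi> y" by (auto simp: EPhi_def)
    show "\<exists>W' \<in> EPhi S G \<Phi>. match G R W \<sigma> W'"
    proof (cases "\<exists>y'. (y, \<sigma>, y') \<in> trans S")
      case True
      then obtain y' where "(y, \<sigma>, y') \<in> trans S" by blast
      then have "match G R W \<sigma> (theta S G \<Phi> y')" unfolding Wy by (rule match_theta_step[OF sim])
      then show ?thesis by (rule bexI) (rule theta_in_EPhi)
    next
      case False
      then have "match G R W \<sigma> W" unfolding Wy by (rule match_theta_refused[OF adm \<open>\<sigma> \<in> Euc\<close>])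
      then show ?thesis using W by blast
    qed
  next
    fix W x z \<sigma> z'
    assume "W \<in> EPhi S G \<Phi>" and a: "(x, z) \<in> W \<and> \<sigma> \<in> Sr \<and> (z, \<sigma>, z') \<in> trans R"
    then obtain y where Wy: "W = theta S G \<Phi> y" by (auto simp: EPhi_def)
    with a have "((y, x), z) \<in> \<Phi>" and reach: "(y, x) \<in> reach (sync S G)" by auto
    then obtain q' where step: "((y, x), \<sigma>, q') \<in> trans (sync S G)" and "(q', z') \<in> \<Phi>"
      using cc a unfolding is_ccsim_def by blast
    moreover obtain y' x' where q': "q' = (y', x')" by (cases q')
    ultimately have "(y, \<sigma>, y') \<in> trans S" and "(x, \<sigma>, x') \<in> trans G"
      and "(x', z') \<in> theta S G \<Phi> y'"
      using reach_step[OF reach step] by auto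
    moreover have "match G R W \<sigma> (theta S G \<Phi> y')"
      unfolding Wy using match_theta_step[OF sim] calculation(1) .
    ultimately show "\<exists>x' W'. (x, \<sigma>, x') \<in> trans G \<and> W' \<in> EPhi S G \<Phi> \<and> (x', z') \<in> W' \<and>
        match G R W \<sigma> W'"
      using theta_in_EPhi[of S G \<Phi> y'] by blast
  qed
qed

lemma init_autE:
  assumes "V \<in> E" and "\<forall>x0 \<in> init G. \<exists>z0 \<in> init R. (x0, z0) \<in> V"
  shows "V \<inter> (init G \<times> init R) \<in> init (autE G R E)"
  using assms by (auto simp: autE_def Estar_def)

text \<open>Intersecting with \<open>Succ\<close> secures condition (iii) of \<open>\<A>(E)\<close> without losing matching.\<close>

lemma trans_autE_restrict:
  assumes "V \<in> E" and "V' \<in> E" and "W \<subseteq> V" and "match G R V \<sigma> V'"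
    and "(x, z) \<in> W" and "(x, \<sigma>, x') \<in> trans G"
  shows "(W, \<sigma>, V' \<inter> Succ G R \<sigma> W) \<in> trans (autE G R E)"
    and "\<exists>z'. (x', z') \<in> V' \<inter> Succ G R \<sigma> W"
proof -
  have match: "match G R W \<sigma> (V' \<inter> Succ G R \<sigma> W)"
    using assms(3,4) unfolding match_def Succ_def by fast
  then obtain z' where "(z, \<sigma>, z') \<in> trans R" "(x', z') \<in> V' \<inter> Succ G R \<sigma> W"
    using assms(5,6) unfolding match_def by blast
  then show "\<exists>z'. (x', z') \<in> V' \<inter> Succ G R \<sigma> W" by blast
  have "W \<in> Estar E" and "V' \<inter> Succ G R \<sigma> W \<in> Estar E"
    using assms(1-3) unfolding Estar_def by blast+
  moreover have "\<exists>x z x' z'. (x, z) \<in> W \<and> (x', z') \<in> V' \<inter> Succ G R \<sigma> W \<and>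
      (x, \<sigma>, x') \<in> trans G \<and> (z, \<sigma>, z') \<in> trans R"
    using assms(5,6) \<open>(z, \<sigma>, z') \<in> trans R\<close> \<open>(x', z') \<in> V' \<inter> Succ G R \<sigma> W\<close> by blast
  ultimately show "(W, \<sigma>, V' \<inter> Succ G R \<sigma> W) \<in> trans (autE G R E)"
    using match unfolding autE_def by simp
qed

lemma sim_autE_EPhi:
  assumes sim: "is_sim (sync S G) R \<Phi>"
  shows "sim (sync S G) (sync (autE G R (EPhi S G \<Phi>)) G)"
proof -
  define Rel where "Rel = {((y, x), (W, x')). x' = x \<and> W \<subseteq> theta S G \<Phi> y \<and> (\<exists>z. (x, z) \<in> W)}"
  have "is_sim (sync S G) (sync (autE G R (EPhi S G \<Phi>)) G) Rel"
    unfolding is_sim_def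
  proof (intro conjI ballI allI impI)
    fix q0 assume "q0 \<in> init (sync S G)"
    then obtain y0 x0 where q0: "q0 = (y0, x0)" "y0 \<in> init S" "x0 \<in> init G" by auto
    let ?W0 = "theta S G \<Phi> y0 \<inter> (init G \<times> init R)"
    have covers: "\<forall>x \<in> init G. \<exists>z \<in> init R. (x, z) \<in> theta S G \<Phi> y0"
      using theta_covers_init[OF sim q0(2)] by blast
    then have "(?W0, x0) \<in> init (sync (autE G R (EPhi S G \<Phi>)) G)"
      using init_autE[OF theta_in_EPhi covers] q0(3) by simp
    moreover have "(q0, (?W0, x0)) \<in> Rel"
      using covers q0(3) unfolding Rel_def q0(1) by blast
    ultimately show "\<exists>p0 \<in> init (sync (autE G R (EPhi S G \<Phi>)) G). (q0, p0) \<in> Rel" by blast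
  next
    fix q p \<sigma> q'
    assume a: "(q, p) \<in> Rel \<and> (q, \<sigma>, q') \<in> trans (sync S G)"
    obtain y x W x1 y' x' where qp: "q = (y, x)" "p = (W, x1)" "q' = (y', x')"
      by (cases q, cases p, cases q') blast
    with a have W: "W \<subseteq> theta S G \<Phi> y" "\<exists>z. (x, z) \<in> W" and "x1 = x"
      and steps: "(y, \<sigma>, y') \<in> trans S" "(x, \<sigma>, x') \<in> trans G"
      unfolding Rel_def by auto
    from W(2) obtain z where "(x, z) \<in> W" ..
    let ?W' = "theta S G \<Phi> y' \<inter> Succ G R \<sigma> W"
    note restrict = trans_autE_restrict[OF theta_in_EPhi theta_in_EPhi W(1)
        match_theta_step[OF sim steps(1)] \<open>(x, z) \<in> W\<close> steps(2)]
    have "(p, \<sigma>, (?W', x')) \<in> trans (sync (autE G R (EPhi S G \<Phi>)) G)"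
      using restrict(1) steps(2) unfolding qp(2) \<open>x1 = x\<close> by simp
    moreover have "(q', (?W', x')) \<in> Rel"
      using restrict(2) unfolding Rel_def qp(3) by blast
    ultimately show "\<exists>p'. (p, \<sigma>, p') \<in> trans (sync (autE G R (EPhi S G \<Phi>)) G) \<and> (q', p') \<in> Rel"
      by blast
  qed
  then show ?thesis unfolding sim_def by blast
qed

theorem lemma8:
  fixes G :: "('x, 'e::finite) aut" and R :: "('z, 'e) aut" and S :: "('y, 'e) aut"
    and Euc Sr :: "'e set"
  assumes "is_aut G" and "is_aut R"
    and "S \<in> SPR Euc Sr G R"
  shows "(\<exists>E. ctrl_set Euc Sr G R E \<and> sim (sync S G) (sync (autE G R E) G)) \<and>
         (\<forall>\<Phi>. is_ccsim Sr (sync S G) R \<Phi> \<longrightarrow>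
            ctrl_set Euc Sr G R (EPhi S G \<Phi>) \<and>
            sim (sync S G) (sync (autE G R (EPhi S G \<Phi>)) G))"
proof -
  have S: "is_aut S" "admissible Euc S G" "ccsim Sr (sync S G) R"
    using assms(3) by (auto simp: SPR_def)
  have EPhi: "ctrl_set Euc Sr G R (EPhi S G \<Phi>) \<and> sim (sync S G) (sync (autE G R (EPhi S G \<Phi>)) G)"
    if "is_ccsim Sr (sync S G) R \<Phi>" for \<Phi>
    using ctrl_set_EPhi[OF S(1,2) that] sim_autE_EPhi[OF is_ccsim_is_sim[OF that]] by blast
  obtain \<Phi> where "is_ccsim Sr (sync S G) R \<Phi>" using S(3) unfolding ccsim_def by blast
  then show ?thesis using EPhi by blast
qed

end
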